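(* Let $K$ be a field of characteristic zero and $m\ge1$. The tropical valuation $\operatorname{trop}:K(\!(\mathbf{t})\!)\to V\mathbb{B}(\mathbf{t})$ is a surjective $K$-algebra B\'ezout valuation; in particular, for all $a,b\in K(\!(\mathbf{t})\!)$ there exist $x,y\in K(\!(\mathbf{t})\!)^\circ$ with $\operatorname{trop}(xa+yb)=\operatorname{trop}(a)\oplus\operatorname{trop}(b)$.
   Context: $\mathbf{t}=(t_1,\dots,t_m)$, $K(\!(\mathbf{t})\!)=\operatorname{Frac}K[\![\mathbf{t}]\!]$. For $A\subseteq\mathbb{N}^m$ the Newton polyhedron is $\operatorname{conv}(A)+\mathbb{R}^m_{\ge0}$. $V\mathbb{B}[\mathbf{t}]$ is the idempotent semiring of subsets of $\mathbb{N}^m$ equal to the vertex set of their Newton polyhedron, with $a\oplus b$ = vertex set of the Newton polyhedron of $a\cup b$ and $a\odot b$ = vertex set of that of the Minkowski sum $a+b$ ($0=\emptyset$, $1=\{0\}$). $V\mathbb{B}(\mathbf{t})$ is its fraction semifield, with $\frac ab\oplus\frac cd=\frac{a\odot d\oplus b\odot c}{b\odot d}$, $\frac ab\odot\frac cd=\frac{a\odot c}{b\odot d}$, ordered by $x\le y$ iff $x\oplus y=y$. $\operatorname{trop}(f)$ for $f\in K[\![\mathbf{t}]\!]$ is the vertex set of the Newton polyhedron of $\operatorname{Supp}(f)$, and $\operatorname{trop}(f/g)=\operatorname{trop}(f)/\operatorname{trop}(g)$; this is known to be a surjective valuation (multiplicative, $\operatorname{trop}(a+b)\le\operatorname{trop}(a)\oplus\operatorname{trop}(b)$,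 zero only at $0$). $K(\!(\mathbf{t})\!)^\circ=\{q:\operatorname{trop}(q)\le1\}$. A B\'ezout valuation $v$ on a field $R$ is one such that for all $a,b$ there are $x,y\in R^\circ$ with $v(xa+yb)=v(a)+v(b)$; "$K$-algebra" means $\operatorname{trop}(c)=1$ for nonzero constants $c\in K$. *)

theory Defs
  imports "HOL-Analysis.Analysis"
begin

text \<open>The variables t_1..t_m are indexed by a finite type 'm (so m = CARD('m) \<ge> 1).\<close>

type_synonym 'm expo = "'m \<Rightarrow> nat"
type_synonym ('a, 'm) mps = "'m expo \<Rightarrow> 'a"

definition expo_zero :: "'m expo" where
  "expo_zero = (\<lambda>_. 0)"

definition expo_add :: "'m expo \<Rightarrow> 'm expo \<Rightarrow> 'm expo" where
  "expo_add u v = (\<lambda>i. u i + v i)"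

definition mps_add :: "('a::field, 'm) mps \<Rightarrow> ('a, 'm) mps \<Rightarrow> ('a, 'm) mps" where
  "mps_add f g = (\<lambda>e. f e + g e)"

definition mps_mult :: "('a::field, 'm::finite) mps \<Rightarrow> ('a, 'm) mps \<Rightarrow> ('a, 'm) mps" where
  "mps_mult f g = (\<lambda>e. \<Sum>p\<in>{p. \<forall>i. p i \<le> e i}. f p * g (\<lambda>i. e i - p i))"

definition mps_const :: "'a::field \<Rightarrow> ('a, 'm) mps" where
  "mps_const c = (\<lambda>e. if e = expo_zero then c else 0)"

definition mps_one :: "('a::field, 'm) mps" where
  "mps_one = mps_const 1"

definition supp :: "('a::field, 'm) mps \<Rightarrow> 'm expo set" where
  "supp f = {e. f e \<noteq> 0}"

section \<open>K((t)) = Frac K[[t]], represented by pairs (numerator, nonzero denominator)\<close>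

definition Kfrac :: "(('a::field, 'm) mps \<times> ('a, 'm) mps) set" where
  "Kfrac = {(f, g). g \<noteq> (\<lambda>_. 0)}"

definition fr_add :: "('a::field, 'm::finite) mps \<times> ('a, 'm) mps \<Rightarrow> ('a, 'm) mps \<times> ('a, 'm) mps
    \<Rightarrow> ('a, 'm) mps \<times> ('a, 'm) mps" where
  "fr_add p q = (mps_add (mps_mult (fst p) (snd q)) (mps_mult (fst q) (snd p)),
                 mps_mult (snd p) (snd q))"

definition fr_mult :: "('a::field, 'm::finite) mps \<times> ('a, 'm) mps \<Rightarrow> ('a, 'm) mps \<times> ('a, 'm) mps
    \<Rightarrow> ('a, 'm) mps \<times> ('a, 'm) mps" where
  "fr_mult p q = (mps_mult (fst p) (fst q), mps_mult (snd p) (snd q))"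

definition emb :: "'m::finite expo \<Rightarrow> real ^ 'm" where
  "emb v = (\<chi> i. real (v i))"

definition orthant :: "(real ^ 'm::finite) set" where
  "orthant = {x. \<forall>i. 0 \<le> x $ i}"

definition newton :: "'m::finite expo set \<Rightarrow> (real ^ 'm) set" where
  "newton A = {x + y | x y. x \<in> convex hull (emb ` A) \<and> y \<in> orthant}"

definition vert :: "'m::finite expo set \<Rightarrow> 'm expo set" where
  "vert A = {v. emb v extreme_point_of newton A}"

definition VBt :: "'m::finite expo set set" where
  "VBt = {a. vert a = a}"

definition vb_add :: "'m::finite expo set \<Rightarrow> 'm expo set \<Rightarrow> 'm expo set" where
  "vb_add a b = vert (a \<union> b)"

definition vb_mult :: "'m::finite expo set \<Rightarrow> 'm expo set \<Rightarrow> 'm expo set" where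
  "vb_mult a b = vert {expo_add x y | x y. x \<in> a \<and> y \<in> b}"

section \<open>The fraction semifield VB(t), represented by pairs (a, b) with b \<noteq> 0\<close>

definition VBfrac :: "('m::finite expo set \<times> 'm expo set) set" where
  "VBfrac = {(a, b). a \<in> VBt \<and> b \<in> VBt \<and> b \<noteq> {}}"

text \<open>Equality of fractions a/b = c/d (VB[t] is cancellative, so cross multiplication).\<close>
definition vf_eq :: "'m::finite expo set \<times> 'm expo set \<Rightarrow> 'm expo set \<times> 'm expo set \<Rightarrow> bool" where
  "vf_eq p q \<longleftrightarrow> vb_mult (fst p) (snd q) = vb_mult (snd p) (fst q)"

definition vf_add :: "'m::finite expo set \<times> 'm expo set \<Rightarrow> 'm expo set \<times> 'm expo set
    \<Rightarrow> 'm expo set \<times> 'm expo set" where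
  "vf_add p q = (vb_add (vb_mult (fst p) (snd q)) (vb_mult (snd p) (fst q)),
                 vb_mult (snd p) (snd q))"

definition vf_mult :: "'m::finite expo set \<times> 'm expo set \<Rightarrow> 'm expo set \<times> 'm expo set
    \<Rightarrow> 'm expo set \<times> 'm expo set" where
  "vf_mult p q = (vb_mult (fst p) (fst q), vb_mult (snd p) (snd q))"

definition vf_zero :: "'m::finite expo set \<times> 'm expo set" where
  "vf_zero = ({}, {expo_zero})"

definition vf_one :: "'m::finite expo set \<times> 'm expo set" where
  "vf_one = ({expo_zero}, {expo_zero})"

definition vf_le :: "'m::finite expo set \<times> 'm expo set \<Rightarrow> 'm expo set \<times> 'm expo set \<Rightarrow> bool" where
  "vf_le x y \<longleftrightarrow> vf_eq (vf_add x y) y"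

definition trop_series :: "('a::field, 'm::finite) mps \<Rightarrow> 'm expo set" where
  "trop_series f = vert (supp f)"

definition trop :: "('a::field, 'm::finite) mps \<times> ('a, 'm) mps \<Rightarrow> 'm expo set \<times> 'm expo set" where
  "trop q = (trop_series (fst q), trop_series (snd q))"

end

theory Submission
  imports Defs
begin

text \<open>A Newton polyhedron is determined by its vertex set: a non-vertex can be removed from a
  finite exponent set without changing the polyhedron, and by Dickson's lemma only the finitely
  many minimal exponents of an arbitrary set matter. Hence trop takes values in VB(t), and
  identities in VB(t) can be checked on Newton polyhedra, where the product becomes the Minkowski
  sum. Multiplicativity holds because a vertex of a Minkowski sum decomposes uniquely, so at a
  vertex the coefficient of fg is a single product of nonzero coefficients; subadditivity holds
  because supp (f + g) is contained in supp f \<union> supp g. For the Bezout property take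
  x = 1 and y = c a constant: cancellation in u + c w at one of the finitely many vertices of
  supp u \<union> supp w excludes only one value of c, and K is infinite.\<close>

section \<open>Newton polyhedra\<close>

lemma emb_expo_add: "emb (expo_add u v) = emb u + emb v"
  by (simp add: emb_def expo_add_def vec_eq_iff)

lemma emb_eq_iff [simp]: "emb u = emb v \<longleftrightarrow> u = v"
  by (auto simp: emb_def vec_eq_iff fun_eq_iff)

lemma orthant_add: "v \<in> orthant \<Longrightarrow> w \<in> orthant \<Longrightarrow> v + w \<in> orthant"
  by (simp add: orthant_def)

lemma orthant_scaleR: "0 \<le> c \<Longrightarrow> w \<in> orthant \<Longrightarrow> c *\<^sub>R w \<in> orthant"
  by (simp add: orthant_def)

lemma orthant_add_eq_0D: "v \<in> orthant \<Longrightarrow> w \<in> orthant \<Longrightarrow> v + w = 0 \<Longrightarrow> v = 0"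
  by (simp add: orthant_def vec_eq_iff) (smt (verit))

lemma emb_diff_in_orthant: "m \<le> a \<Longrightarrow> emb a - emb m \<in> orthant"
  by (auto simp: orthant_def emb_def le_fun_def)

lemma newton_eq_set_plus: "newton A = convex hull (emb ` A) + orthant"
  by (auto simp: newton_def set_plus_def)

lemma convex_newton: "convex (newton A)"
  unfolding newton_eq_set_plus
  by (intro convex_set_plus convex_convex_hull) (auto simp: orthant_def convex_def)

lemma newton_add_orthant: "x \<in> newton A \<Longrightarrow> w \<in> orthant \<Longrightarrow> x + w \<in> newton A"
  unfolding newton_def by (force simp: add.assoc intro: orthant_add)

lemma emb_in_newton: "a \<in> A \<Longrightarrow> emb a \<in> newton A"
  unfolding newton_def by (force intro: hull_inc simp: orthant_def)

lemma convex_hull_subset_newton: "convex hull (emb ` A) \<subseteq> newton A"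
  by (force simp: newton_def orthant_def)

lemma newton_empty [simp]: "newton {} = {}"
  by (simp add: newton_def)

lemma newton_minimal:
  assumes "convex N" "\<And>x w. x \<in> N \<Longrightarrow> w \<in> orthant \<Longrightarrow> x + w \<in> N" "emb ` A \<subseteq> N"
  shows "newton A \<subseteq> N"
proof
  fix y assume "y \<in> newton A"
  then obtain x w where "y = x + w" "x \<in> convex hull (emb ` A)" "w \<in> orthant"
    by (auto simp: newton_def)
  moreover have "convex hull (emb ` A) \<subseteq> N"
    using assms by (simp add: hull_minimal)
  ultimately show "y \<in> N" using assms(2) by auto
qed

lemma newton_subsetI: "(\<And>a. a \<in> A \<Longrightarrow> emb a \<in> newton B) \<Longrightarrow> newton A \<subseteq> newton B"
  by (intro newton_minimal convex_newton newton_add_orthant) auto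

lemma newton_mono: "A \<subseteq> B \<Longrightarrow> newton A \<subseteq> newton B"
  by (intro newton_subsetI emb_in_newton) auto

lemma newton_Un_absorb: "newton A \<subseteq> newton B \<Longrightarrow> newton (A \<union> B) = newton B"
  by (intro equalityI newton_subsetI newton_mono) (auto intro: emb_in_newton)

lemma newton_Un_cong:
  assumes "newton A = newton A'" "newton B = newton B'"
  shows "newton (A \<union> B) = newton (A' \<union> B')"
proof -
  have "newton (A \<union> B) \<subseteq> newton (A' \<union> B')" if "newton A \<subseteq> newton A'" "newton B \<subseteq> newton B'"
    for A B A' B' :: "'m::finite expo set"
    using that newton_mono[of A' "A' \<union> B'"] newton_mono[of B' "A' \<union> B'"]
    by (intro newton_subsetI) (auto dest: emb_in_newton)
  then show ?thesis using assms by blast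
qed

section \<open>Vertices of Newton polyhedra\<close>

lemma extreme_point_midpoint_eq:
  assumes "x extreme_point_of S" "y \<in> S" "z \<in> S" "x = midpoint y z"
  shows "y = z"
  using assms midpoint_in_open_segment[of y z] unfolding extreme_point_of_def by metis

lemma not_extreme_point_newton_add_orthant:
  assumes "x \<in> newton A" "w \<in> orthant" "w \<noteq> 0"
  shows "\<not> (x + w) extreme_point_of newton A"
proof
  assume "(x + w) extreme_point_of newton A"
  moreover have "x + 2 *\<^sub>R w \<in> newton A"
    using assms by (intro newton_add_orthant orthant_scaleR) auto
  moreover have "x + w = midpoint x (x + 2 *\<^sub>R w)"
    by (simp add: midpoint_def vec_eq_iff)
  ultimately have "x = x + 2 *\<^sub>R w"
    using assms(1) extreme_point_midpoint_eq by blast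
  then show False using assms(3) by simp
qed

lemma vert_subset: "vert A \<subseteq> A"
proof
  fix v assume "v \<in> vert A"
  then have ext: "emb v extreme_point_of newton A" by (simp add: vert_def)
  then obtain x w where xw: "emb v = x + w" "x \<in> convex hull (emb ` A)" "w \<in> orthant"
    by (auto simp: extreme_point_of_def newton_def)
  have "w = 0"
    using not_extreme_point_newton_add_orthant[of x A w] ext xw convex_hull_subset_newton by auto
  then have "emb v extreme_point_of convex hull (emb ` A)"
    using ext xw convex_hull_subset_newton[of A] unfolding extreme_point_of_def by auto
  then show "v \<in> A" by (auto dest: extreme_point_of_convex_hull)
qed

lemma vert_cong: "newton A = newton B \<Longrightarrow> vert A = vert B"
  by (simp add: vert_def)

lemma newton_insert_cases:
  assumes "y \<in> newton (insert a B)"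
  obtains (shifted_orthant) w where "w \<in> orthant" "y = emb a + w"
    | (segment) t x where "0 < t" "t \<le> 1" "x \<in> newton B" "y = (1 - t) *\<^sub>R emb a + t *\<^sub>R x"
proof -
  obtain c w where y: "y = c + w" "c \<in> convex hull (insert (emb a) (emb ` B))" "w \<in> orthant"
    using assms by (auto simp: newton_def)
  show thesis
  proof (cases "B = {}")
    case True
    then show thesis using y shifted_orthant by simp
  next
    case False
    then obtain t d where d: "c = (1 - t) *\<^sub>R emb a + t *\<^sub>R d" "0 \<le> t" "t \<le> 1"
        "d \<in> convex hull (emb ` B)"
      using y(2) by (auto simp: convex_hull_insert_alt)
    show thesis
    proof (cases "t = 0")
      case True
      then show thesis using y d shifted_orthant by simp
    next
      case False
      have "d \<in> newton B"
        using d(4) convex_hull_subset_newton by blast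
      then have "d + (1 / t) *\<^sub>R w \<in> newton B"
        using d(2) y(3) by (simp add: newton_add_orthant orthant_scaleR)
      moreover have "y = (1 - t) *\<^sub>R emb a + t *\<^sub>R (d + (1 / t) *\<^sub>R w)"
        using y(1) d(1) False by (simp add: algebra_simps)
      ultimately show thesis
        using d(2,3) False by (intro segment[of t]) auto
    qed
  qed
qed

lemma not_in_open_segment_add_orthant:
  assumes "v \<in> orthant" "w \<in> orthant"
  shows "x \<notin> open_segment (x + v) (x + w)"
proof
  assume "x \<in> open_segment (x + v) (x + w)"
  then obtain u where u: "0 < u" "u < 1" "v \<noteq> w" "x = (1 - u) *\<^sub>R (x + v) + u *\<^sub>R (x + w)"
    by (auto simp: in_segment)
  from u(4) have "(1 - u) *\<^sub>R v + u *\<^sub>R w = 0"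
    by (simp add: algebra_simps)
  then have "(1 - u) *\<^sub>R v = 0" "u *\<^sub>R w = 0"
    using u(1,2) assms orthant_add_eq_0D[of "(1 - u) *\<^sub>R v" "u *\<^sub>R w"]
      orthant_add_eq_0D[of "u *\<^sub>R w" "(1 - u) *\<^sub>R v"]
    by (simp_all add: orthant_scaleR add.commute)
  then show False using u(1-3) by simp
qed

text \<open>Solving the segment equation for emb a expresses it as a convex combination of points of
  newton B, plus a vector of the orthant.\<close>
lemma emb_in_newton_if_open_segment:
  assumes "emb a \<in> open_segment y z" "z \<in> newton (insert a B)"
    and y: "0 < s" "s \<le> 1" "x \<in> newton B" "y = (1 - s) *\<^sub>R emb a + s *\<^sub>R x"
  shows "emb a \<in> newton B"
proof -
  obtain u where u: "0 < u" "u < 1" "emb a = (1 - u) *\<^sub>R y + u *\<^sub>R z"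
    using assms(1) by (auto simp: in_segment)
  from assms(2) show ?thesis
  proof (cases rule: newton_insert_cases)
    case (shifted_orthant w)
    define \<gamma> where "\<gamma> = (1 - u) * s"
    have "\<gamma> > 0" using u(2) y(1) by (simp add: \<gamma>_def)
    have scaled: "\<gamma> *\<^sub>R emb a = \<gamma> *\<^sub>R x + u *\<^sub>R w"
      using u(3)[unfolded y(4) \<open>z = emb a + w\<close>] by (simp add: \<gamma>_def algebra_simps)
    have "emb a = inverse \<gamma> *\<^sub>R (\<gamma> *\<^sub>R emb a)"
      using \<open>\<gamma> > 0\<close> by simp
    also have "\<dots> = x + (u / \<gamma>) *\<^sub>R w"
      unfolding scaled using \<open>\<gamma> > 0\<close> by (simp add: scaleR_add_right divide_inverse_commute)
    finally show ?thesis
      using y u(1) \<open>\<gamma> > 0\<close> \<open>w \<in> orthant\<close> by (simp add: newton_add_orthant orthant_scaleR)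
  next
    case (segment t x')
    define \<alpha> \<beta> where "\<alpha> = (1 - u) * s" and "\<beta> = u * t"
    have "\<alpha> > 0" "\<beta> > 0"
      using u(1,2) y(1) segment(1) by (simp_all add: \<alpha>_def \<beta>_def)
    have scaled: "(\<alpha> + \<beta>) *\<^sub>R emb a = \<alpha> *\<^sub>R x + \<beta> *\<^sub>R x'"
      using u(3)[unfolded y(4) \<open>z = _\<close>] by (simp add: \<alpha>_def \<beta>_def algebra_simps)
    have "emb a = inverse (\<alpha> + \<beta>) *\<^sub>R ((\<alpha> + \<beta>) *\<^sub>R emb a)"
      using \<open>\<alpha> > 0\<close> \<open>\<beta> > 0\<close> by simp
    also have "\<dots> = (\<alpha> / (\<alpha> + \<beta>)) *\<^sub>R x + (\<beta> / (\<alpha> + \<beta>)) *\<^sub>R x'"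
      unfolding scaled by (simp add: scaleR_add_right divide_inverse_commute)
    finally show ?thesis
      using y segment \<open>\<alpha> > 0\<close> \<open>\<beta> > 0\<close>
      by (simp add: convexD[OF convex_newton] add_divide_distrib[symmetric])
  qed
qed

lemma emb_in_newton_remove_nonvertex:
  assumes "a \<in> A" "a \<notin> vert A"
  shows "emb a \<in> newton (A - {a})"
proof -
  have A: "newton A = newton (insert a (A - {a}))"
    using assms(1) by (simp add: insert_absorb)
  have "\<not> emb a extreme_point_of newton A" using assms(2) by (simp add: vert_def)
  then obtain y z where y: "y \<in> newton A" and z: "z \<in> newton A" and yz: "emb a \<in> open_segment y z"
    using emb_in_newton[OF assms(1)] unfolding extreme_point_of_def by blast
  from y[unfolded A] show ?thesis
  proof (cases rule: newton_insert_cases)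
    case (segment s x)
    then show ?thesis using yz z[unfolded A] by (intro emb_in_newton_if_open_segment)
  next
    case (shifted_orthant v)
    from z[unfolded A] show ?thesis
    proof (cases rule: newton_insert_cases)
      case (segment t x)
      moreover have "emb a \<in> open_segment z y" using yz by (metis open_segment_commute)
      ultimately show ?thesis
        using y[unfolded A] by (intro emb_in_newton_if_open_segment)
    next
      case (shifted_orthant w)
      then show ?thesis
        using yz \<open>y = emb a + v\<close> \<open>v \<in> orthant\<close> not_in_open_segment_add_orthant[of v w "emb a"] by simp
    qed
  qed
qed

lemma newton_remove_nonvertex:
  assumes "a \<in> A" "a \<notin> vert A"
  shows "newton (A - {a}) = newton A"
proof
  show "newton (A - {a}) \<subseteq> newton A" by (rule newton_mono) auto
  show "newton A \<subseteq> newton (A - {a})"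
    using emb_in_newton_remove_nonvertex[OF assms] by (intro newton_subsetI) (auto intro: emb_in_newton)
qed

lemma vert_empty [simp]: "vert {} = {}"
  using vert_subset by blast

lemma newton_vert_finite: "finite A \<Longrightarrow> newton (vert A) = newton A"
proof (induction A rule: finite_remove_induct)
  case empty
  show ?case by simp
next
  case (remove A)
  show ?case
  proof (cases "vert A = A")
    case False
    then obtain a where a: "a \<in> A" "a \<notin> vert A" using vert_subset by blast
    then have "newton (A - {a}) = newton A" by (rule newton_remove_nonvertex)
    then show ?thesis using remove.IH[OF a(1)] vert_cong by metis
  qed simp
qed

text \<open>Dickson's lemma: every element other than a fixed m0 lies below m0 in some coordinate j,
  and each level set {m. m j = k} is an antichain for the remaining coordinates.\<close>
lemma finite_antichain_nat_fun:
  fixes M :: "('i \<Rightarrow> nat) set"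
  assumes "finite J" "\<And>m m'. m \<in> M \<Longrightarrow> m' \<in> M \<Longrightarrow> \<forall>i\<in>J. m i \<le> m' i \<Longrightarrow> m = m'"
  shows "finite M"
  using assms
proof (induction J arbitrary: M rule: finite_remove_induct)
  case empty
  then have "M \<subseteq> {m}" if "m \<in> M" for m using that by blast
  then show ?case by (metis finite.emptyI finite_insert finite_subset subsetI)
next
  case (remove J)
  show ?case
  proof (cases "M = {}")
    case False
    then obtain m0 where "m0 \<in> M" by blast
    have level_finite: "finite {m \<in> M. m j = k}" if "j \<in> J" for j k
    proof (rule remove.IH[OF that])
      fix m m' assume "m \<in> {m \<in> M. m j = k}" "m' \<in> {m \<in> M. m j = k}" "\<forall>i\<in>J - {j}. m i \<le> m' i"
      then show "m = m'"
        using remove.prems by (metis (mono_tags, lifting) DiffI mem_Collect_eq order_refl singletonD)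
    qed
    have "M \<subseteq> insert m0 (\<Union>j\<in>J. \<Union>k<m0 j. {m \<in> M. m j = k})"
    proof
      fix m assume "m \<in> M"
      show "m \<in> insert m0 (\<Union>j\<in>J. \<Union>k<m0 j. {m \<in> M. m j = k})"
      proof (cases "\<forall>i\<in>J. m0 i \<le> m i")
        case True
        then show ?thesis using remove.prems \<open>m \<in> M\<close> \<open>m0 \<in> M\<close> by blast
      next
        case False
        then show ?thesis using \<open>m \<in> M\<close> by (auto simp: not_le)
      qed
    qed
    moreover have "finite (insert m0 (\<Union>j\<in>J. \<Union>k<m0 j. {m \<in> M. m j = k}))"
      using remove.hyps level_finite by blast
    ultimately show ?thesis by (rule finite_subset)
  qed simp
qed

definition minimal_expos :: "'m expo set \<Rightarrow> 'm expo set" where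
  "minimal_expos A = {a \<in> A. \<forall>b\<in>A. b \<le> a \<longrightarrow> b = a}"

lemma finite_minimal_expos: "finite (minimal_expos (A :: 'm::finite expo set))"
  by (rule finite_antichain_nat_fun[of UNIV]) (auto simp: minimal_expos_def le_fun_def)

lemma minimal_expos_below:
  fixes A :: "'m::finite expo set"
  assumes "a \<in> A"
  obtains m where "m \<in> minimal_expos A" "m \<le> a"
proof -
  define S where "S = {b \<in> A. b \<le> a}"
  obtain b where b: "b \<in> S" "\<And>b'. b' \<in> S \<Longrightarrow> sum b UNIV \<le> sum b' UNIV"
    using ex_has_least_nat[of "\<lambda>b. b \<in> S" a "\<lambda>b. sum b UNIV"] assms by (auto simp: S_def)
  have "b' = b" if b': "b' \<in> A" "b' \<le> b" for b'
  proof (rule ccontr)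
    assume "b' \<noteq> b"
    then obtain i where "b' i < b i"
      using b'(2) by (auto simp: le_fun_def fun_eq_iff order.order_iff_strict)
    then have "sum b' UNIV < sum b UNIV"
      using b'(2) by (intro sum_strict_mono_ex1) (auto simp: le_fun_def)
    moreover have "b' \<in> S" using b' b(1) by (auto simp: S_def)
    ultimately show False using b(2) by (simp add: not_le[symmetric])
  qed
  then show thesis using that b(1) by (auto simp: S_def minimal_expos_def)
qed

lemma newton_minimal_expos: "newton (minimal_expos A) = newton (A :: 'm::finite expo set)"
proof
  show "newton (minimal_expos A) \<subseteq> newton A" by (rule newton_mono) (auto simp: minimal_expos_def)
  show "newton A \<subseteq> newton (minimal_expos A)"
  proof (rule newton_subsetI)
    fix a assume "a \<in> A"
    then obtain m where "m \<in> minimal_expos A" "m \<le> a" by (rule minimal_expos_below)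
    then have "emb m + (emb a - emb m) \<in> newton (minimal_expos A)"
      by (intro newton_add_orthant emb_in_newton emb_diff_in_orthant)
    then show "emb a \<in> newton (minimal_expos A)" by simp
  qed
qed

lemma newton_vert: "newton (vert A) = newton A"
proof -
  have "vert A = vert (minimal_expos A)" by (rule vert_cong) (simp add: newton_minimal_expos)
  then show ?thesis
    using newton_vert_finite[OF finite_minimal_expos] newton_minimal_expos by metis
qed

lemma vert_vert [simp]: "vert (vert A) = vert A"
  by (rule vert_cong) (rule newton_vert)

lemma vert_eq_iff_newton_eq: "vert A = vert B \<longleftrightarrow> newton A = newton B"
  by (metis newton_vert vert_cong)

lemma vert_empty_iff [simp]: "vert A = {} \<longleftrightarrow> A = {}"
  by (metis emb_in_newton equals0D equals0I newton_empty newton_vert vert_subset subset_empty)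

lemma vert_singleton [simp]: "vert {a} = {a}"
  using vert_subset vert_empty_iff by blast

lemma vert_subset_minimal_expos: "vert A \<subseteq> minimal_expos A"
proof
  fix v assume v: "v \<in> vert A"
  have "b = v" if "b \<in> A" "b \<le> v" for b
  proof (rule ccontr)
    assume "b \<noteq> v"
    then have "\<not> (emb b + (emb v - emb b)) extreme_point_of newton A"
      using that by (intro not_extreme_point_newton_add_orthant emb_in_newton emb_diff_in_orthant) auto
    then show False using v by (simp add: vert_def)
  qed
  then show "v \<in> minimal_expos A" using v vert_subset by (auto simp: minimal_expos_def)
qed

lemma finite_vert: "finite (vert A)"
  using vert_subset_minimal_expos finite_minimal_expos by (rule finite_subset)

section \<open>Minkowski sums and the operations of VB(t)\<close>

definition sumset :: "'m expo set \<Rightarrow> 'm expo set \<Rightarrow> 'm expo set" where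
  "sumset A B = {expo_add a b | a b. a \<in> A \<and> b \<in> B}"

lemma vb_mult_eq_vert_sumset: "vb_mult A B = vert (sumset A B)"
  by (simp add: vb_mult_def sumset_def)

lemma expo_add_commute: "expo_add a b = expo_add b a"
  by (simp add: expo_add_def add.commute)

lemma sumset_commute: "sumset A B = sumset B A"
  unfolding sumset_def using expo_add_commute by blast

lemma vb_mult_commute: "vb_mult A B = vb_mult B A"
  by (simp add: vb_mult_eq_vert_sumset sumset_commute)

lemma sumset_zero_right [simp]: "sumset A {expo_zero} = A"
  by (auto simp: sumset_def expo_add_def expo_zero_def)

lemma sumset_empty_right [simp]: "sumset A {} = {}"
  by (simp add: sumset_def)

lemma newton_sumset:
  fixes A B :: "'m::finite expo set"
  shows "newton (sumset A B) = newton A + newton B"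
proof
  have emb_sumset: "emb ` sumset A B = emb ` A + emb ` B"
    by (force simp: sumset_def set_plus_def emb_expo_add)
  show "newton (sumset A B) \<subseteq> newton A + newton B"
  proof (rule newton_minimal)
    show "convex (newton A + newton B)" by (intro convex_set_plus convex_newton)
    show "emb ` sumset A B \<subseteq> newton A + newton B"
      unfolding emb_sumset by (intro set_plus_mono2) (auto intro: emb_in_newton)
    fix x w :: "real ^ 'm" assume "x \<in> newton A + newton B" "w \<in> orthant"
    moreover obtain p q where "x = p + q" "p \<in> newton A" "q \<in> newton B"
      using \<open>x \<in> newton A + newton B\<close> by (rule set_plus_elim)
    ultimately have "x + w = (p + w) + q" "p + w \<in> newton A"
      by (simp_all add: algebra_simps newton_add_orthant)
    then show "x + w \<in> newton A + newton B" using \<open>q \<in> newton B\<close> by (metis set_plus_intro)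
  qed
  show "newton A + newton B \<subseteq> newton (sumset A B)"
  proof
    fix y assume "y \<in> newton A + newton B"
    then obtain c1 w1 c2 w2 where y: "y = (c1 + w1) + (c2 + w2)"
      "c1 \<in> convex hull (emb ` A)" "c2 \<in> convex hull (emb ` B)" "w1 \<in> orthant" "w2 \<in> orthant"
      by (auto simp: set_plus_def newton_def)
    then have "y = (c1 + c2) + (w1 + w2)" by (simp add: algebra_simps)
    have "c1 + c2 \<in> convex hull (emb ` sumset A B)"
      unfolding emb_sumset convex_hull_set_plus using y by auto
    then show "y \<in> newton (sumset A B)"
      using \<open>y = (c1 + c2) + (w1 + w2)\<close> y orthant_add unfolding newton_def by blast
  qed
qed

lemma newton_vb_mult: "newton (vb_mult A B) = newton A + newton B"
  by (simp add: vb_mult_eq_vert_sumset newton_vert newton_sumset)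

lemma newton_vb_add: "newton (vb_add A B) = newton (A \<union> B)"
  by (simp add: vb_add_def newton_vert)

lemma vert_sumset_unique_decomposition:
  assumes v: "v \<in> vert (sumset A B)"
    and "a \<in> A" "b \<in> B" "v = expo_add a b"
    and "a' \<in> A" "b' \<in> B" "v = expo_add a' b'"
  shows "a' = a" "b' = b"
proof -
  have v_eq: "v i = a i + b i" "v i = a' i + b' i" for i
    using fun_cong[OF assms(4), of i] fun_cong[OF assms(7), of i] by (simp_all add: expo_add_def)
  have "emb v extreme_point_of newton (sumset A B)" using v by (simp add: vert_def)
  moreover have "emb (expo_add a b') \<in> newton (sumset A B)" "emb (expo_add a' b) \<in> newton (sumset A B)"
    using assms by (auto intro!: emb_in_newton simp: sumset_def)
  moreover have "emb v = midpoint (emb (expo_add a b')) (emb (expo_add a' b))"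
  proof -
    have "expo_add (expo_add a b') (expo_add a' b) = expo_add v v"
    proof
      fix i show "expo_add (expo_add a b') (expo_add a' b) i = expo_add v v i"
        unfolding expo_add_def using v_eq[of i] by linarith
    qed
    then have "emb (expo_add a b') + emb (expo_add a' b) = 2 *\<^sub>R emb v"
      by (metis emb_expo_add scaleR_2)
    then show ?thesis by (simp add: midpoint_def)
  qed
  ultimately have "emb (expo_add a b') = emb (expo_add a' b)" by (rule extreme_point_midpoint_eq)
  then have "expo_add a b' = expo_add a' b" by simp
  then have cross: "a i + b' i = a' i + b i" for i by (simp add: expo_add_def fun_eq_iff)
  have "a' i = a i \<and> b' i = b i" for i using cross[of i] v_eq[of i] by linarith
  then show "a' = a" "b' = b" by (simp_all add: fun_eq_iff)
qed

lemma vb_mult_eq_iff: "vb_mult A B = vb_mult C D \<longleftrightarrow> newton A + newton B = newton C + newton D"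
  by (simp add: vb_mult_eq_vert_sumset vert_eq_iff_newton_eq newton_sumset)

lemma vb_add_vert: "vb_add (vert A) (vert B) = vert (A \<union> B)"
  unfolding vb_add_def by (intro vert_cong newton_Un_cong newton_vert)

lemma vf_eq_refl: "vf_eq p p"
  by (simp add: vf_eq_def vb_mult_commute)

lemma vf_le_same_denom:
  assumes "newton X \<subseteq> newton Y"
  shows "vf_le (X, E) (Y, E)"
proof -
  have "newton (vb_mult X E) \<subseteq> newton (vb_mult E Y)"
    using assms by (simp add: newton_vb_mult add.commute set_plus_mono2)
  then have "newton (vb_add (vb_mult X E) (vb_mult E Y)) = newton E + newton Y"
    by (simp add: newton_vb_add newton_Un_absorb newton_vb_mult)
  then show ?thesis
    by (simp add: vf_le_def vf_add_def vf_eq_def vb_mult_eq_iff newton_vb_mult ac_simps)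
qed

section \<open>Power series and the tropical valuation\<close>

lemma finite_expos_below: "finite {p :: 'm::finite expo. \<forall>i. p i \<le> e i}"
proof (rule finite_subset)
  show "{p :: 'm expo. \<forall>i. p i \<le> e i} \<subseteq> PiE UNIV (\<lambda>i. {..e i})"
    by (auto simp: PiE_iff)
qed (intro finite_PiE; simp)

lemma supp_mps_add: "supp (mps_add f g) \<subseteq> supp f \<union> supp g"
  by (auto simp: supp_def mps_add_def)

lemma supp_mps_mult: "supp (mps_mult f g) \<subseteq> sumset (supp f) (supp g)"
proof
  fix e assume "e \<in> supp (mps_mult f g)"
  then obtain p where p: "\<forall>i. p i \<le> e i" "f p * g (\<lambda>i. e i - p i) \<noteq> 0"
    unfolding supp_def mps_mult_def by (auto elim: sum.not_neutral_contains_not_neutral)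
  then have "e = expo_add p (\<lambda>i. e i - p i)" by (simp add: expo_add_def fun_eq_iff)
  with p(2) show "e \<in> sumset (supp f) (supp g)" unfolding sumset_def supp_def by auto
qed

lemma mps_mult_at_vertex:
  fixes f g :: "('a::field, 'm::finite) mps"
  assumes v: "v \<in> vert (sumset (supp f) (supp g))"
    and ab: "a \<in> supp f" "b \<in> supp g" "v = expo_add a b"
  shows "mps_mult f g v = f a * g b"
proof -
  let ?P = "{p. \<forall>i. p i \<le> v i}"
  have a: "a \<in> ?P" and b: "(\<lambda>i. v i - a i) = b"
    using ab(3) by (simp_all add: expo_add_def fun_eq_iff)
  have other_terms: "f p * g (\<lambda>i. v i - p i) = 0" if "p \<in> ?P - {a}" for p
  proof (rule ccontr)
    assume "f p * g (\<lambda>i. v i - p i) \<noteq> 0"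
    moreover have "v = expo_add p (\<lambda>i. v i - p i)"
      using that by (simp add: expo_add_def fun_eq_iff)
    ultimately have "p = a"
      using vert_sumset_unique_decomposition(1)[OF v ab, of p "\<lambda>i. v i - p i"]
      by (simp add: supp_def)
    then show False using that by simp
  qed
  then have "mps_mult f g v = f a * g (\<lambda>i. v i - a i)"
    unfolding mps_mult_def sum.remove[OF finite_expos_below a]
    by (simp add: sum.neutral other_terms)
  then show ?thesis using b by simp
qed

lemma trop_series_mult:
  fixes f g :: "('a::field, 'm::finite) mps"
  shows "trop_series (mps_mult f g) = vb_mult (trop_series f) (trop_series g)"
proof -
  have "vert (sumset (supp f) (supp g)) \<subseteq> supp (mps_mult f g)"
  proof
    fix v assume v: "v \<in> vert (sumset (supp f) (supp g))"
    then obtain a b where ab: "a \<in> supp f" "b \<in> supp g" "v = expo_add a b"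
      using vert_subset by (force simp: sumset_def)
    then have "mps_mult f g v = f a * g b" using v by (intro mps_mult_at_vertex)
    with ab show "v \<in> supp (mps_mult f g)" by (simp add: supp_def)
  qed
  then have "newton (sumset (supp f) (supp g)) \<subseteq> newton (supp (mps_mult f g))"
    by (metis newton_mono newton_vert)
  moreover have "newton (supp (mps_mult f g)) \<subseteq> newton (sumset (supp f) (supp g))"
    by (intro newton_mono supp_mps_mult)
  ultimately show ?thesis
    by (simp add: trop_series_def vb_mult_eq_vert_sumset vert_eq_iff_newton_eq newton_sumset newton_vert)
qed

lemma mps_mult_const:
  fixes f :: "('a::field, 'm::finite) mps"
  shows "mps_mult (mps_const c) f = (\<lambda>e. c * f e)"
proof
  fix e
  have "mps_mult (mps_const c) f e = (\<Sum>p\<in>{p. \<forall>i. p i \<le> e i}. if p = expo_zero then c * f e else 0)"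
    unfolding mps_mult_def mps_const_def by (intro sum.cong) (auto simp: expo_zero_def)
  also have "\<dots> = c * f e" using finite_expos_below[of e] by (simp add: expo_zero_def)
  finally show "mps_mult (mps_const c) f e = c * f e" .
qed

lemma mps_mult_one: "mps_mult mps_one f = (f :: ('a::field, 'm::finite) mps)"
  by (simp add: mps_one_def mps_mult_const)

lemma mps_one_neq_zero: "(mps_one :: ('a::field, 'm) mps) \<noteq> (\<lambda>_. 0)"
  by (metis mps_const_def mps_one_def one_neq_zero)

lemma mps_mult_scale_left: "mps_mult (\<lambda>e. c * g e) h = (\<lambda>e. c * mps_mult g h e)"
  by (simp add: mps_mult_def sum_distrib_left mult.assoc)

lemma trop_series_const:
  "c \<noteq> 0 \<Longrightarrow> trop_series (mps_const c :: ('a::field, 'm::finite) mps) = {expo_zero}"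
  by (auto simp: trop_series_def supp_def mps_const_def)

lemma trop_series_one: "trop_series (mps_one :: ('a::field, 'm::finite) mps) = {expo_zero}"
  by (simp add: mps_one_def trop_series_const)

lemma trop_series_add_generic_multiple:
  fixes u w :: "('a::field, 'm::finite) mps"
  assumes "infinite (UNIV :: 'a set)"
  obtains c where "c \<noteq> 0" "trop_series (mps_add u (\<lambda>e. c * w e)) = vb_add (trop_series u) (trop_series w)"
proof -
  define V where "V = vert (supp u \<union> supp w)"
  have "finite (insert 0 ((\<lambda>v. - u v / w v) ` V))" by (simp add: V_def finite_vert)
  then obtain c where c: "c \<notin> insert 0 ((\<lambda>v. - u v / w v) ` V)"
    using ex_new_if_finite[OF assms] by blast
  let ?s = "mps_add u (\<lambda>e. c * w e)"
  have "V \<subseteq> supp ?s"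
  proof
    fix v assume "v \<in> V"
    then have "v \<in> supp u \<union> supp w" using vert_subset unfolding V_def by blast
    moreover have "u v + c * w v \<noteq> 0" if "w v \<noteq> 0"
    proof
      assume "u v + c * w v = 0"
      then have "c = - u v / w v" using that by (simp add: field_simps add_eq_0_iff)
      then show False using c \<open>v \<in> V\<close> by simp
    qed
    ultimately show "v \<in> supp ?s" by (cases "w v = 0") (auto simp: supp_def mps_add_def)
  qed
  then have "newton (supp u \<union> supp w) \<subseteq> newton (supp ?s)"
    unfolding V_def by (metis newton_mono newton_vert)
  moreover have "newton (supp ?s) \<subseteq> newton (supp u \<union> supp w)"
    by (intro newton_mono) (auto simp: supp_def mps_add_def)
  ultimately have "trop_series ?s = vb_add (trop_series u) (trop_series w)"
    by (simp add: trop_series_def vb_add_vert vert_eq_iff_newton_eq)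
  then show thesis using c that by blast
qed

lemma trop_in_VBfrac:
  fixes q :: "('a::field, 'm::finite) mps \<times> ('a, 'm) mps"
  assumes "q \<in> Kfrac"
  shows "trop q \<in> VBfrac"
proof -
  have "supp (snd q) \<noteq> {}" using assms by (auto simp: Kfrac_def supp_def)
  then show ?thesis by (simp add: trop_def trop_series_def VBfrac_def VBt_def)
qed

definition mps_indicator :: "'m expo set \<Rightarrow> ('a::field, 'm) mps" where
  "mps_indicator A = (\<lambda>e. if e \<in> A then 1 else 0)"

lemma supp_mps_indicator [simp]: "supp (mps_indicator A :: ('a::field, 'm) mps) = A"
  by (simp add: supp_def mps_indicator_def)

lemma trop_surj:
  fixes z :: "'m::finite expo set \<times> 'm expo set"
  assumes "z \<in> VBfrac"
  obtains q :: "('a::field, 'm) mps \<times> ('a, 'm) mps" where "q \<in> Kfrac" "trop q = z"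
proof
  let ?q = "(mps_indicator (fst z), mps_indicator (snd z)) :: ('a, 'm) mps \<times> ('a, 'm) mps"
  have "supp (snd ?q) \<noteq> {}" using assms by (cases z) (simp add: VBfrac_def)
  then show "?q \<in> Kfrac" by (auto simp: Kfrac_def supp_def)
  show "trop ?q = z" using assms by (auto simp: trop_def trop_series_def VBfrac_def VBt_def)
qed

lemma trop_fr_mult:
  fixes p q :: "('a::field, 'm::finite) mps \<times> ('a, 'm) mps"
  shows "trop (fr_mult p q) = vf_mult (trop p) (trop q)"
  by (simp add: fr_mult_def trop_def vf_mult_def trop_series_mult)

lemma trop_fr_add_le:
  fixes p q :: "('a::field, 'm::finite) mps \<times> ('a, 'm) mps"
  shows "vf_le (trop (fr_add p q)) (vf_add (trop p) (trop q))"
proof -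
  define h1 h2 where "h1 = mps_mult (fst p) (snd q)" and "h2 = mps_mult (fst q) (snd p)"
  have "newton (trop_series (mps_add h1 h2)) \<subseteq> newton (supp h1 \<union> supp h2)"
    by (simp add: trop_series_def newton_vert newton_mono supp_mps_add)
  also have "\<dots> = newton (vb_add (trop_series h1) (trop_series h2))"
    by (simp add: trop_series_def vb_add_vert newton_vert)
  finally have "vf_le (trop_series (mps_add h1 h2), trop_series (mps_mult (snd p) (snd q)))
                      (vb_add (trop_series h1) (trop_series h2), trop_series (mps_mult (snd p) (snd q)))"
    by (rule vf_le_same_denom)
  then show ?thesis
    by (simp add: h1_def h2_def trop_def fr_add_def vf_add_def trop_series_mult vb_mult_commute)
qed

lemma trop_eq_zero_iff:
  fixes q :: "('a::field, 'm::finite) mps \<times> ('a, 'm) mps"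
  shows "vf_eq (trop q) vf_zero \<longleftrightarrow> fst q = (\<lambda>_. 0)"
  by (auto simp: vf_eq_def vf_zero_def trop_def vb_mult_eq_vert_sumset trop_series_def supp_def)

lemma trop_const:
  fixes c :: "'a::field"
  assumes "c \<noteq> 0"
  shows "trop (mps_const c :: ('a, 'm::finite) mps, mps_one) = vf_one"
  using assms by (simp add: trop_def trop_series_const trop_series_one vf_one_def)

lemma trop_bezout:
  fixes a b :: "('a::field, 'm::finite) mps \<times> ('a, 'm) mps"
  assumes "infinite (UNIV :: 'a set)"
  obtains x y where "x \<in> Kfrac" "y \<in> Kfrac" "vf_le (trop x) vf_one" "vf_le (trop y) vf_one"
    "vf_eq (trop (fr_add (fr_mult x a) (fr_mult y b))) (vf_add (trop a) (trop b))"
proof -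
  define u w where "u = mps_mult (fst a) (snd b)" and "w = mps_mult (fst b) (snd a)"
  obtain c where c: "c \<noteq> 0"
    "trop_series (mps_add u (\<lambda>e. c * w e)) = vb_add (trop_series u) (trop_series w)"
    using trop_series_add_generic_multiple[OF assms] .
  let ?x = "(mps_one, mps_one) :: ('a, 'm) mps \<times> ('a, 'm) mps"
  let ?y = "(mps_const c, mps_one) :: ('a, 'm) mps \<times> ('a, 'm) mps"
  have "?x \<in> Kfrac" "?y \<in> Kfrac" by (simp_all add: Kfrac_def mps_one_neq_zero)
  moreover have "trop ?x = vf_one" "trop ?y = vf_one"
    using trop_const[of 1] trop_const[OF c(1)] by (simp_all add: mps_one_def)
  moreover have "vf_le vf_one vf_one" unfolding vf_one_def by (rule vf_le_same_denom) simp
  moreover have "fr_add (fr_mult ?x a) (fr_mult ?y b) = (mps_add u (\<lambda>e. c * w e), mps_mult (snd a) (snd b))"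
    by (simp add: fr_add_def fr_mult_def mps_mult_one mps_mult_const mps_mult_scale_left u_def w_def)
  then have "trop (fr_add (fr_mult ?x a) (fr_mult ?y b)) = vf_add (trop a) (trop b)"
    using c(2) by (simp add: trop_def vf_add_def trop_series_mult u_def w_def vb_mult_commute)
  ultimately show thesis using that vf_eq_refl by metis
qed

theorem proposition2p19:
  shows
    "(\<forall>q \<in> (Kfrac :: (('a::field_char_0, 'm::finite) mps \<times> ('a, 'm) mps) set). trop q \<in> VBfrac)
   \<and> (\<forall>z \<in> (VBfrac :: ('m expo set \<times> 'm expo set) set).
        \<exists>q \<in> (Kfrac :: (('a, 'm) mps \<times> ('a, 'm) mps) set). vf_eq (trop q) z)
   \<and> (\<forall>p \<in> (Kfrac :: (('a, 'm) mps \<times> ('a, 'm) mps) set). \<forall>q \<in> Kfrac.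
        vf_eq (trop (fr_mult p q)) (vf_mult (trop p) (trop q)))
   \<and> (\<forall>p \<in> (Kfrac :: (('a, 'm) mps \<times> ('a, 'm) mps) set). \<forall>q \<in> Kfrac.
        vf_le (trop (fr_add p q)) (vf_add (trop p) (trop q)))
   \<and> (\<forall>q \<in> (Kfrac :: (('a, 'm) mps \<times> ('a, 'm) mps) set).
        vf_eq (trop q) vf_zero \<longleftrightarrow> fst q = (\<lambda>_. 0))
   \<and> (\<forall>c :: 'a. c \<noteq> 0 \<longrightarrow>
        vf_eq (trop (mps_const c :: ('a, 'm) mps, mps_one :: ('a, 'm) mps)) vf_one)
   \<and> (\<forall>a \<in> (Kfrac :: (('a, 'm) mps \<times> ('a, 'm) mps) set). \<forall>b \<in> Kfrac.
        \<exists>x \<in> Kfrac. \<exists>y \<in> Kfrac.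
          vf_le (trop x) vf_one \<and> vf_le (trop y) vf_one \<and>
          vf_eq (trop (fr_add (fr_mult x a) (fr_mult y b))) (vf_add (trop a) (trop b)))"
proof (intro conjI ballI allI impI)
  show "\<exists>q \<in> (Kfrac :: (('a, 'm) mps \<times> ('a, 'm) mps) set). vf_eq (trop q) z" if "z \<in> VBfrac" for z
    using trop_surj[OF that] vf_eq_refl by metis
  show "\<exists>x \<in> Kfrac. \<exists>y \<in> Kfrac. vf_le (trop x) vf_one \<and> vf_le (trop y) vf_one \<and>
          vf_eq (trop (fr_add (fr_mult x a) (fr_mult y b))) (vf_add (trop a) (trop b))"
    for a b :: "('a, 'm) mps \<times> ('a, 'm) mps"
    using trop_bezout[OF infinite_UNIV_char_0] by metis
qed (simp_all add: trop_in_VBfrac trop_fr_mult trop_fr_add_le trop_eq_zero_iff trop_const vf_eq_refl)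

end
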